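(* Let $n\ge2$ and $T=\alpha_0I+\alpha_1D+\cdots+\alpha_nD^n\in\mathcal L(\mathcal P_n)$ with $\alpha_0,\dots,\alpha_n\in\mathbb C$, $\alpha_0\ne0$. Then for every $\varepsilon>0$ there exists $C_T(\varepsilon)>0$ such that for every $f\in\mathcal P_n$ of degree at least $2$ with simple roots, $$\tau(f)>C_T(\varepsilon)\ \Longrightarrow\ d_F\Bigl(Z\bigl(S(\alpha_1/\alpha_0)f\bigr),Z(Tf)\Bigr)<\varepsilon.$$
   Context: $\mathcal P_n$ is the complex vector space of polynomials of degree at most $n$, $D$ differentiation, $I$ identity. For $\beta\in\mathbb C$, $S(\beta)$ is the shift $(S(\beta)f)(z)=f(\beta+z)$, so $Z(S(\beta)f)=\{-\beta\}+Z(f)$. $Z(f)$ denotes the roots of $f$ counted with multiplicity; $\deg Tf=\deg f$ for such $T$. For $f$ of degree $\ge2$ with at least two distinct roots, $\tau(f):=\min\{|w-v|:w\in Z(f),\ v\in Z(f')\setminus\{w\}\}$. For multisets $A=\{u_1,\dots,u_m\}$, $B=\{v_1,\dots,v_m\}$ in $\mathbb C$, $d_F(A,B)=\min_{\sigma}\max_k|u_k-v_{\sigma(k)}|$ over permutations $\sigma$ of $\{1,\dots,m\}$. *)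

theory Defs
  imports "HOL-Computational_Algebra.Polynomial" "HOL-Library.Multiset" "HOL-Combinatorics.Permutations"
begin

definition roots_mset :: "complex poly \<Rightarrow> complex multiset" where
  "roots_mset f = Abs_multiset (\<lambda>x. if f = 0 then 0 else order x f)"

definition diff_op :: "nat \<Rightarrow> (nat \<Rightarrow> complex) \<Rightarrow> complex poly \<Rightarrow> complex poly" where
  "diff_op n \<alpha> f = (\<Sum>k\<le>n. smult (\<alpha> k) ((pderiv ^^ k) f))"

definition shift_poly :: "complex \<Rightarrow> complex poly \<Rightarrow> complex poly" where
  "shift_poly \<beta> f = pcompose f [:\<beta>, 1:]"

definition tau :: "complex poly \<Rightarrow> real" where
  "tau f = Min {cmod (w - v) | w v. poly f w = 0 \<and> poly (pderiv f) v = 0 \<and> v \<noteq> w}"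

definition dF :: "complex multiset \<Rightarrow> complex multiset \<Rightarrow> real" where
  "dF A B = (let u = (SOME xs. mset xs = A); v = (SOME ys. mset ys = B); m = size A in
     Min ((\<lambda>\<sigma>. Max ((\<lambda>k. cmod (u ! k - v ! (\<sigma> k))) ` {..<m})) ` {\<sigma>. \<sigma> permutes {..<m}}))"

end

theory Submission
  imports Defs "HOL-Computational_Algebra.Fundamental_Theorem_Algebra"
begin

(* Put beta = alpha 1 / alpha 0, g = S(beta) f and h = T f.  Taylor's formula gives
     h(z) = alpha 0 * (f(z + beta) + sum_k delta_k f^(k)(z)),
   with defects delta_k = alpha_k/alpha_0 - beta^k/k! vanishing for k = 0, 1.  So h/alpha_0 is g plus
   a combination of the derivatives f^(k), k >= 2.  Writing p = c * prod (z - r) over its roots, one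
   gets |p^(k)(x)| D^k <= (deg p)^k |p(x)| when all roots are at distance >= D from x, and
   |p(x)| <= 2^deg |p(y)| when |x - y| is at most the distance from y to the roots.  If tau f is large:
   (1) every root z of h is within eps of a root a - beta of g (first within a fixed radius; then,
       the roots of f' being far away, within eps);
   (2) at each root u of g, h' dominates the higher Taylor coefficients of h on the eps-disc, so h is
       injective there with nonvanishing derivative.
   Hence h has simple roots, each eps-close to a root of g and no two eps-close to the same one; as
   deg h = deg g this matching is a permutation, so d_F(Z(g), Z(h)) < eps. *)

lemma roots_mset_eq_proots: "roots_mset p = proots p"
proof -
  have "(\<lambda>x. if p = 0 then 0 else order x p) = count (proots p)"
    by (auto simp: fun_eq_iff)
  then show ?thesis unfolding roots_mset_def by (simp add: count_inverse)
qed

lemma higher_pderiv_pcompose_shift: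
  "(pderiv ^^ k) (pcompose p [:x, 1:]) = pcompose ((pderiv ^^ k) p) [:x, 1:]"
  by (induction k) (simp_all add: pderiv_pcompose pderiv_pCons)

lemma coeff_eq_higher_pderiv_at_0:
  fixes p :: "'a :: field_char_0 poly"
  shows "coeff p k = poly ((pderiv ^^ k) p) 0 / fact k"
proof -
  have "poly ((pderiv ^^ k) p) 0 = pochhammer 1 k * coeff p k"
    by (simp add: poly_0_coeff_0 coeff_higher_pderiv)
  then show ?thesis by (simp add: pochhammer_fact[symmetric])
qed

lemma poly_taylor:
  fixes p :: "'a :: field_char_0 poly"
  assumes "degree p \<le> N"
  shows "poly p (x + s) = (\<Sum>k\<le>N. poly ((pderiv ^^ k) p) x / fact k * s ^ k)"
proof -
  let ?r = "pcompose p [:x, 1:]"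
  have "poly p (x + s) = poly ?r s" by (simp add: poly_pcompose)
  also have "\<dots> = (\<Sum>k\<le>N. coeff ?r k * s ^ k)"
    unfolding poly_altdef using assms
    by (intro sum.mono_neutral_left) (auto simp: coeff_eq_0 degree_pcompose)
  also have "\<dots> = (\<Sum>k\<le>N. poly ((pderiv ^^ k) p) x / fact k * s ^ k)"
    by (simp add: coeff_eq_higher_pderiv_at_0 higher_pderiv_pcompose_shift poly_pcompose)
  finally show ?thesis .
qed

(* delta_k: the coefficient of D^k in T / alpha_0 minus that of S(beta) = sum_k beta^k/k! D^k. *)
definition shift_defect :: "(nat \<Rightarrow> complex) \<Rightarrow> nat \<Rightarrow> complex" where
  "shift_defect \<alpha> k = \<alpha> k / \<alpha> 0 - (\<alpha> 1 / \<alpha> 0) ^ k / fact k"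

definition defect_mass :: "nat \<Rightarrow> (nat \<Rightarrow> complex) \<Rightarrow> real" where
  "defect_mass n \<alpha> = (\<Sum>k\<le>n. cmod (shift_defect \<alpha> k))"

lemma shift_defect_0_1:
  assumes "\<alpha> 0 \<noteq> 0"
  shows "shift_defect \<alpha> 0 = 0" "shift_defect \<alpha> 1 = 0"
  using assms by (simp_all add: shift_defect_def)

lemma defect_mass_nonneg: "defect_mass n \<alpha> \<ge> 0"
  unfolding defect_mass_def by (intro sum_nonneg) auto

lemma poly_diff_op: "poly (diff_op n \<alpha> p) z = (\<Sum>k\<le>n. \<alpha> k * poly ((pderiv ^^ k) p) z)"
  by (simp add: diff_op_def poly_sum)

lemma poly_diff_op_shift:
  assumes "degree p \<le> n" "\<alpha> 0 \<noteq> 0"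
  shows "poly (diff_op n \<alpha> p) z = \<alpha> 0 * (poly p (z + \<alpha> 1 / \<alpha> 0)
           + (\<Sum>k\<le>n. shift_defect \<alpha> k * poly ((pderiv ^^ k) p) z))"
proof -
  have "poly p (z + \<alpha> 1 / \<alpha> 0) + (\<Sum>k\<le>n. shift_defect \<alpha> k * poly ((pderiv ^^ k) p) z)
      = (\<Sum>k\<le>n. poly ((pderiv ^^ k) p) z / fact k * (\<alpha> 1 / \<alpha> 0) ^ k
                 + shift_defect \<alpha> k * poly ((pderiv ^^ k) p) z)"
    by (simp add: poly_taylor[OF assms(1)] sum.distrib)
  also have "\<dots> = (\<Sum>k\<le>n. \<alpha> k / \<alpha> 0 * poly ((pderiv ^^ k) p) z)"
    by (intro sum.cong refl) (simp add: shift_defect_def algebra_simps)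
  finally show ?thesis
    using assms(2) by (simp add: poly_diff_op sum_distrib_left)
qed

lemma higher_pderiv_diff_op:
  "(pderiv ^^ j) (diff_op n \<alpha> p) = diff_op n \<alpha> ((pderiv ^^ j) p)"
proof -
  have "(pderiv ^^ j) ((pderiv ^^ k) p) = (pderiv ^^ k) ((pderiv ^^ j) p)" for k
    by (metis add.commute funpow_add o_apply)
  then show ?thesis
    unfolding diff_op_def by (simp add: higher_pderiv_sum higher_pderiv_smult)
qed

lemma degree_diff_op:
  assumes "\<alpha> 0 \<noteq> 0" "p \<noteq> 0"
  shows "degree (diff_op n \<alpha> p) = degree p"
proof -
  have coeff_top: "coeff (diff_op n \<alpha> p) i = \<alpha> 0 * coeff p i" if "i \<ge> degree p" for i
  proof -
    have "coeff (diff_op n \<alpha> p) i = (\<Sum>k\<le>n. \<alpha> k * coeff ((pderiv ^^ k) p) i)"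
      by (simp add: diff_op_def coeff_sum)
    also have "\<dots> = \<alpha> 0 * coeff p i"
      unfolding sum.atMost_shift using that
      by (simp add: coeff_higher_pderiv coeff_eq_0 del: funpow.simps)
    finally show ?thesis .
  qed
  have "degree (diff_op n \<alpha> p) \<le> degree p"
    by (rule degree_le) (use coeff_top in \<open>auto simp: coeff_eq_0\<close>)
  moreover have "degree p \<le> degree (diff_op n \<alpha> p)"
    using coeff_top[of "degree p"] assms by (intro le_degree) simp
  ultimately show ?thesis by simp
qed

(* The defect terms only involve derivatives of order at least 2. *)
lemma defect_sum_bound:
  assumes "\<alpha> 0 \<noteq> 0" "M \<ge> 0" "\<And>k. 2 \<le> k \<Longrightarrow> k \<le> n \<Longrightarrow> cmod (g k) \<le> M"
  shows "cmod (\<Sum>k\<le>n. shift_defect \<alpha> k * g k) \<le> defect_mass n \<alpha> * M"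
proof -
  have "cmod (shift_defect \<alpha> k * g k) \<le> cmod (shift_defect \<alpha> k) * M" if "k \<le> n" for k
  proof (cases "k < 2")
    case True
    then have "k = 0 \<or> k = 1" by auto
    then show ?thesis using shift_defect_0_1[of \<alpha>] assms(1,2) by auto
  next
    case False
    then show ?thesis using assms(3)[of k] that by (auto simp: norm_mult intro: mult_left_mono)
  qed
  then have "cmod (\<Sum>k\<le>n. shift_defect \<alpha> k * g k) \<le> (\<Sum>k\<le>n. cmod (shift_defect \<alpha> k) * M)"
    by (intro order_trans[OF norm_sum sum_mono]) auto
  then show ?thesis by (simp add: defect_mass_def sum_distrib_right)
qed

lemma diff_op_root_bound:
  assumes "degree f \<le> n" "\<alpha> 0 \<noteq> 0" "poly (diff_op n \<alpha> f) z = 0" "M \<ge> 0"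
    and "\<And>k. 2 \<le> k \<Longrightarrow> k \<le> n \<Longrightarrow> cmod (poly ((pderiv ^^ k) f) z) \<le> M"
  shows "cmod (poly f (z + \<alpha> 1 / \<alpha> 0)) \<le> defect_mass n \<alpha> * M"
proof -
  have "poly f (z + \<alpha> 1 / \<alpha> 0) = - (\<Sum>k\<le>n. shift_defect \<alpha> k * poly ((pderiv ^^ k) f) z)"
    using poly_diff_op_shift[of f n \<alpha> z] assms(1-3) by (simp add: eq_neg_iff_add_eq_0)
  then show ?thesis
    using defect_sum_bound[of \<alpha> M n "\<lambda>k. poly ((pderiv ^^ k) f) z"] assms(2,4,5) by simp
qed


definition linprod :: "complex multiset \<Rightarrow> complex poly" where
  "linprod R = (\<Prod>r\<in>#R. [:-r, 1:])"

lemma linprod_add_mset: "linprod (add_mset r R) = [:-r, 1:] * linprod R"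
  by (simp add: linprod_def)

lemma poly_linear_factor: "poly [:-r, 1:] (x :: complex) = x - r"
  by (simp add: algebra_simps)

lemma poly_eq_smult_linprod: "p = smult (lead_coeff p) (linprod (proots p))"
  unfolding linprod_def using complex_poly_decompose_multiset[of p] by simp

lemma higher_pderiv_linear_mult:
  "(pderiv ^^ k) ([:-r, 1:] * q) = [:-r, 1:] * (pderiv ^^ k) q + smult (of_nat k) ((pderiv ^^ (k - 1)) q)"
proof (induction k)
  case 0
  then show ?case by simp
next
  case (Suc k)
  have "(pderiv ^^ Suc k) ([:-r, 1:] * q)
      = [:-r, 1:] * (pderiv ^^ Suc k) q + (pderiv ^^ k) q + smult (of_nat k) (pderiv ((pderiv ^^ (k - 1)) q))"
    using Suc by (simp add: pderiv_mult pderiv_add pderiv_smult pderiv_pCons algebra_simps)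
  also have "smult (of_nat k) (pderiv ((pderiv ^^ (k - 1)) q)) = smult (of_nat k) ((pderiv ^^ k) q)"
    by (cases k) auto
  finally show ?case by (simp add: algebra_simps smult_add_left)
qed

lemma power_Suc_plus_le:
  fixes s :: real
  assumes "s \<ge> 0"
  shows "s ^ Suc j + of_nat (Suc j) * s ^ j \<le> (s + 1) ^ Suc j"
proof (induction j)
  case 0
  then show ?case by simp
next
  case (Suc j)
  have "s ^ Suc (Suc j) + of_nat (Suc (Suc j)) * s ^ Suc j \<le> (s + 1) * (s ^ Suc j + of_nat (Suc j) * s ^ j)"
    using assms by (simp add: algebra_simps)
  also have "\<dots> \<le> (s + 1) * (s + 1) ^ Suc j"
    using Suc assms by (intro mult_left_mono) auto
  finally show ?case by simp
qed

lemma linprod_higher_pderiv_bound: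
  assumes "D > 0" "\<forall>r\<in>#R. D \<le> cmod (x - r)"
  shows "cmod (poly ((pderiv ^^ k) (linprod R)) x) * D ^ k \<le> real (size R) ^ k * cmod (poly (linprod R) x)"
  using assms(2)
proof (induction R arbitrary: k)
  case empty
  then show ?case by (cases k) (auto simp: linprod_def funpow_Suc_right simp del: funpow.simps)
next
  case (add r R)
  define s where "s = real (size R)"
  define P where "P = (\<lambda>k. cmod (poly ((pderiv ^^ k) (linprod R)) x))"
  define t where "t = cmod (x - r)"
  have IH: "P k * D ^ k \<le> s ^ k * P 0" for k
    using add unfolding P_def s_def by auto
  have t: "D \<le> t" using add by (auto simp: t_def)
  show ?case
  proof (cases k)
    case 0
    then show ?thesis by simp
  next
    case (Suc j)
    have "poly ((pderiv ^^ Suc j) (linprod (add_mset r R))) x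
        = (x - r) * poly ((pderiv ^^ Suc j) (linprod R)) x + of_nat (Suc j) * poly ((pderiv ^^ j) (linprod R)) x"
      by (simp only: linprod_add_mset higher_pderiv_linear_mult) (simp add: algebra_simps)
    then have "cmod (poly ((pderiv ^^ Suc j) (linprod (add_mset r R))) x) \<le> t * P (Suc j) + of_nat (Suc j) * P j"
      unfolding P_def t_def by (metis norm_mult norm_of_nat norm_triangle_ineq)
    then have "cmod (poly ((pderiv ^^ Suc j) (linprod (add_mset r R))) x) * D ^ Suc j
        \<le> (t * P (Suc j) + of_nat (Suc j) * P j) * D ^ Suc j"
      using \<open>D > 0\<close> by (intro mult_right_mono) auto
    also have "\<dots> = t * (P (Suc j) * D ^ Suc j) + of_nat (Suc j) * (P j * D ^ j) * D"
      by (simp add: algebra_simps)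
    also have "\<dots> \<le> t * (s ^ Suc j * P 0) + of_nat (Suc j) * (s ^ j * P 0) * t"
    proof (rule add_mono)
      show "t * (P (Suc j) * D ^ Suc j) \<le> t * (s ^ Suc j * P 0)"
        using IH[of "Suc j"] t \<open>D > 0\<close> by (intro mult_left_mono) auto
      have "of_nat (Suc j) * (P j * D ^ j) \<le> of_nat (Suc j) * (s ^ j * P 0)"
        using IH[of j] by (intro mult_left_mono) auto
      then show "of_nat (Suc j) * (P j * D ^ j) * D \<le> of_nat (Suc j) * (s ^ j * P 0) * t"
        using t \<open>D > 0\<close> unfolding P_def s_def by (intro mult_mono[OF _ t]) auto
    qed
    also have "\<dots> = t * P 0 * (s ^ Suc j + of_nat (Suc j) * s ^ j)"
      by (simp add: algebra_simps)
    also have "\<dots> \<le> t * P 0 * (s + 1) ^ Suc j"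
      by (intro mult_left_mono power_Suc_plus_le) (auto simp: s_def P_def t_def)
    also have "\<dots> = real (size (add_mset r R)) ^ k * cmod (poly (linprod (add_mset r R)) x)"
      by (simp only: Suc s_def P_def t_def linprod_add_mset poly_mult norm_mult size_add_mset
          poly_linear_factor funpow_0) (simp add: algebra_simps)
    finally show ?thesis using Suc by simp
  qed
qed

lemma linprod_doubling:
  assumes "\<forall>r\<in>#R. cmod (x - r) \<le> 2 * cmod (y - r)"
  shows "cmod (poly (linprod R) x) \<le> 2 ^ size R * cmod (poly (linprod R) y)"
  using assms
proof (induction R)
  case empty
  then show ?case by (simp add: linprod_def)
next
  case (add r R)
  then have "cmod (x - r) * cmod (poly (linprod R) x) \<le> (2 * cmod (y - r)) * (2 ^ size R * cmod (poly (linprod R) y))"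
    by (intro mult_mono) auto
  then show ?case
    by (simp only: linprod_add_mset poly_mult norm_mult size_add_mset power_Suc poly_linear_factor)
      (simp add: algebra_simps)
qed

lemma higher_pderiv_bound:
  fixes p :: "complex poly"
  assumes "p \<noteq> 0" "D > 0" "\<And>r. poly p r = 0 \<Longrightarrow> D \<le> cmod (x - r)"
  shows "cmod (poly ((pderiv ^^ k) p) x) * D ^ k \<le> real (degree p) ^ k * cmod (poly p x)"
proof -
  have roots: "\<forall>r\<in>#proots p. D \<le> cmod (x - r)" using assms by auto
  have "cmod (poly ((pderiv ^^ k) p) x) * D ^ k
      = cmod (lead_coeff p) * (cmod (poly ((pderiv ^^ k) (linprod (proots p))) x) * D ^ k)"
    by (subst poly_eq_smult_linprod) (simp add: higher_pderiv_smult norm_mult)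
  also have "\<dots> \<le> cmod (lead_coeff p) * (real (size (proots p)) ^ k * cmod (poly (linprod (proots p)) x))"
    by (intro mult_left_mono linprod_higher_pderiv_bound[OF assms(2) roots]) auto
  also have "\<dots> = real (degree p) ^ k * cmod (poly p x)"
    by (subst (3) poly_eq_smult_linprod) (simp add: size_proots_complex norm_mult)
  finally show ?thesis .
qed

lemma higher_pderiv_ratio_bound:
  fixes p :: "complex poly"
  assumes "p \<noteq> 0" "real (degree p) \<le> D" "D > 0" "\<And>r. poly p r = 0 \<Longrightarrow> D \<le> cmod (x - r)" "j \<le> k"
  shows "cmod (poly ((pderiv ^^ k) p) x) \<le> (real (degree p) / D) ^ j * cmod (poly p x)"
proof -
  have "cmod (poly ((pderiv ^^ k) p) x) \<le> real (degree p) ^ k * cmod (poly p x) / D ^ k"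
    using higher_pderiv_bound[OF assms(1,3,4), of k] assms(3) by (simp add: pos_le_divide_eq)
  also have "\<dots> = (real (degree p) / D) ^ k * cmod (poly p x)"
    by (simp add: power_divide)
  also have "\<dots> \<le> (real (degree p) / D) ^ j * cmod (poly p x)"
    using assms by (intro mult_right_mono power_decreasing) auto
  finally show ?thesis .
qed

lemma doubling_bound:
  fixes p :: "complex poly"
  assumes "p \<noteq> 0" "degree p \<le> N" "\<And>r. poly p r = 0 \<Longrightarrow> cmod (x - y) \<le> cmod (y - r)"
  shows "cmod (poly p x) \<le> 2 ^ N * cmod (poly p y)"
proof -
  have "cmod (x - r) \<le> 2 * cmod (y - r)" if "r \<in># proots p" for r
    using norm_triangle_ineq[of "x - y" "y - r"] assms(3)[of r] assms(1) that by simp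
  then have "cmod (poly (linprod (proots p)) x) \<le> 2 ^ degree p * cmod (poly (linprod (proots p)) y)"
    using linprod_doubling[where R = "proots p" and x = x and y = y] by (simp add: size_proots_complex)
  moreover have "cmod (poly p z) = cmod (lead_coeff p) * cmod (poly (linprod (proots p)) z)" for z
    using poly_eq_smult_linprod[of p] by (metis norm_mult poly_smult)
  ultimately have "cmod (poly p x) \<le> 2 ^ degree p * cmod (poly p y)"
    by (simp add: mult_left_mono mult.left_commute)
  also have "\<dots> \<le> 2 ^ N * cmod (poly p y)"
    using assms(2) by (intro mult_right_mono power_increasing) auto
  finally show ?thesis .
qed

lemma higher_pderiv_transfer_bound:
  fixes p :: "complex poly"
  assumes p0: "p \<noteq> 0" and deg: "degree p \<le> N" "real (degree p) \<le> D"
    and D: "D > 0" and zy: "cmod (z - y) \<le> D"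
    and far: "\<And>r. poly p r = 0 \<Longrightarrow> D \<le> cmod (y - r) \<and> D \<le> cmod (z - r)"
    and jk: "j \<le> k"
  shows "cmod (poly ((pderiv ^^ k) p) z) \<le> (real (degree p) / D) ^ j * (2 ^ N * cmod (poly p y))"
proof -
  have "cmod (poly ((pderiv ^^ k) p) z) \<le> (real (degree p) / D) ^ j * cmod (poly p z)"
    using jk far by (intro higher_pderiv_ratio_bound[OF p0 deg(2) D]) auto
  also have "\<dots> \<le> (real (degree p) / D) ^ j * (2 ^ N * cmod (poly p y))"
  proof (intro mult_left_mono doubling_bound[OF p0 deg(1)])
    show "cmod (z - y) \<le> cmod (y - r)" if "poly p r = 0" for r
      using far[OF that] zy by linarith
  qed (use D in simp)
  finally show ?thesis .
qed

lemma higher_pderiv_bound_by_pderiv: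
  fixes f :: "complex poly"
  assumes f'0: "pderiv f \<noteq> 0" and deg: "degree (pderiv f) \<le> N" "real (degree (pderiv f)) \<le> L"
    and L: "L > 0" and zy: "cmod (z - y) \<le> L"
    and far: "\<And>v. poly (pderiv f) v = 0 \<Longrightarrow> L \<le> cmod (y - v) \<and> L \<le> cmod (z - v)"
    and jk: "j < k"
  shows "cmod (poly ((pderiv ^^ k) f) z) \<le> (real (degree (pderiv f)) / L) ^ j * (2 ^ N * cmod (poly (pderiv f) y))"
proof -
  have "(pderiv ^^ k) f = (pderiv ^^ (k - 1)) (pderiv f)"
    using jk by (metis Suc_pred' funpow_Suc_right gr_zeroI not_less_zero o_apply)
  then show ?thesis
    using jk by (simp only:) (rule higher_pderiv_transfer_bound[OF f'0 deg L zy far]; simp)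
qed

lemma tau_le:
  fixes f :: "complex poly"
  assumes "rsquarefree f" "degree f \<ge> 2" "poly f a = 0" "poly (pderiv f) v = 0"
  shows "tau f \<le> cmod (a - v)"
proof -
  have f0: "f \<noteq> 0" using assms(1) by (simp add: rsquarefree_def)
  have d0: "pderiv f \<noteq> 0" using assms(2) by (auto simp: pderiv_eq_0_iff)
  have va: "v \<noteq> a" using assms(1,3,4) by (auto simp: rsquarefree_roots)
  let ?S = "{cmod (w - v) | w v. poly f w = 0 \<and> poly (pderiv f) v = 0 \<and> v \<noteq> w}"
  have "?S \<subseteq> (\<lambda>(w, v). cmod (w - v)) ` ({w. poly f w = 0} \<times> {v. poly (pderiv f) v = 0})"
    by auto
  moreover have "finite ({w. poly f w = 0} \<times> {v. poly (pderiv f) v = 0})"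
    using f0 d0 by (intro finite_cartesian_product poly_roots_finite)
  ultimately have "finite ?S" by (rule finite_subset[OF _ finite_imageI])
  moreover have "cmod (a - v) \<in> ?S" using assms va by blast
  ultimately show ?thesis unfolding tau_def by (rule Min_le)
qed

lemma roots_of_pderiv_far:
  fixes f :: "complex poly"
  assumes "rsquarefree f" "degree f \<ge> 2" "poly f a = 0" "cmod (y - a) + R \<le> tau f"
    and "poly (pderiv f) v = 0"
  shows "R \<le> cmod (y - v)"
proof -
  have "tau f \<le> cmod (a - v)" by (rule tau_le[OF assms(1-3,5)])
  also have "\<dots> \<le> cmod (y - a) + cmod (y - v)"
    using norm_triangle_ineq[of "a - y" "y - v"] norm_minus_commute[of a y] by simp
  finally show ?thesis using assms(4) by linarith
qed

lemma dF_less_if_permutation: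
  assumes "\<And>u v. mset u = A \<Longrightarrow> mset v = B \<Longrightarrow>
             \<exists>\<sigma>. \<sigma> permutes {..<size A} \<and> (\<forall>k<size A. cmod (u ! k - v ! \<sigma> k) < \<epsilon>)"
    and "size A \<ge> 1"
  shows "dF A B < \<epsilon>"
proof -
  define u where "u = (SOME xs. mset xs = A)"
  define v where "v = (SOME ys. mset ys = B)"
  have "mset u = A" unfolding u_def by (rule someI_ex) (rule ex_mset)
  moreover have "mset v = B" unfolding v_def by (rule someI_ex) (rule ex_mset)
  ultimately obtain \<sigma> where \<sigma>: "\<sigma> permutes {..<size A}" "\<forall>k<size A. cmod (u ! k - v ! \<sigma> k) < \<epsilon>"
    using assms(1) by blast
  have "Max ((\<lambda>k. cmod (u ! k - v ! \<sigma> k)) ` {..<size A}) < \<epsilon>"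
    using \<sigma>(2) assms(2) by (subst Max_less_iff) (auto simp: lessThan_empty_iff)
  moreover have "Min ((\<lambda>\<sigma>. Max ((\<lambda>k. cmod (u ! k - v ! \<sigma> k)) ` {..<size A})) ` {\<sigma>. \<sigma> permutes {..<size A}})
      \<le> Max ((\<lambda>k. cmod (u ! k - v ! \<sigma> k)) ` {..<size A})"
    using \<sigma>(1) by (intro Min_le finite_imageI finite_permutations) auto
  ultimately show ?thesis
    unfolding dF_def Let_def u_def[symmetric] v_def[symmetric] by linarith
qed

lemma matching_permutation:
  assumes "length u = m" "length v = m"
    and near: "\<And>j. j < m \<Longrightarrow> \<exists>k<m. cmod (u ! k - v ! j) < \<epsilon>"
    and unique: "\<And>k j j'. k < m \<Longrightarrow> j < m \<Longrightarrow> j' < m \<Longrightarrow>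
                   cmod (u ! k - v ! j) < \<epsilon> \<Longrightarrow> cmod (u ! k - v ! j') < \<epsilon> \<Longrightarrow> j = j'"
  shows "\<exists>\<sigma>. \<sigma> permutes {..<m} \<and> (\<forall>k<m. cmod (u ! k - v ! \<sigma> k) < \<epsilon>)"
proof -
  define \<phi> where "\<phi> = (\<lambda>j. SOME k. k < m \<and> cmod (u ! k - v ! j) < \<epsilon>)"
  have \<phi>: "\<phi> j < m \<and> cmod (u ! \<phi> j - v ! j) < \<epsilon>" if "j < m" for j
    unfolding \<phi>_def using near[OF that] by (rule someI_ex)
  have "inj_on \<phi> {..<m}"
  proof (rule inj_onI)
    fix j j' assume "j \<in> {..<m}" "j' \<in> {..<m}" "\<phi> j = \<phi> j'"
    then show "j = j'" using unique[of "\<phi> j" j j'] \<phi>[of j] \<phi>[of j'] by auto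
  qed
  moreover have "\<phi> ` {..<m} = {..<m}"
    by (rule endo_inj_surj) (use \<phi> \<open>inj_on \<phi> {..<m}\<close> in auto)
  ultimately have bij: "bij_betw \<phi> {..<m} {..<m}" by (simp add: bij_betw_def)
  define \<sigma> where "\<sigma> = (\<lambda>k. if k < m then inv_into {..<m} \<phi> k else k)"
  have "bij_betw \<sigma> {..<m} {..<m}"
    using bij_betw_inv_into[OF bij] by (rule iffD1[OF bij_betw_cong, rotated]) (simp add: \<sigma>_def)
  then have "\<sigma> permutes {..<m}" by (rule bij_imp_permutes) (simp add: \<sigma>_def)
  moreover have "cmod (u ! k - v ! \<sigma> k) < \<epsilon>" if "k < m" for k
  proof -
    have "\<sigma> k < m"
      using that bij_betw_apply[OF bij_betw_inv_into[OF bij]] by (simp add: \<sigma>_def)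
    moreover have "\<phi> (\<sigma> k) = k"
      using that bij by (simp add: \<sigma>_def bij_betw_def f_inv_into_f)
    ultimately show ?thesis using \<phi>[of "\<sigma> k"] by simp
  qed
  ultimately show ?thesis by blast
qed

lemma dF_less:
  fixes A B :: "complex multiset"
  assumes sizes: "size B = size A" "size A \<ge> 1"
    and simple: "\<And>x. count B x \<le> 1"
    and near: "\<And>v. v \<in># B \<Longrightarrow> \<exists>u\<in>#A. cmod (u - v) < \<epsilon>"
    and unique: "\<And>u v v'. u \<in># A \<Longrightarrow> v \<in># B \<Longrightarrow> v' \<in># B \<Longrightarrow>
                   cmod (u - v) < \<epsilon> \<Longrightarrow> cmod (u - v') < \<epsilon> \<Longrightarrow> v = v'"
  shows "dF A B < \<epsilon>"
proof (rule dF_less_if_permutation[OF _ sizes(2)])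
  fix u v assume u: "mset u = A" and v: "mset v = B"
  have len: "length u = size A" "length v = size A"
    using u v sizes(1) by (metis size_mset)+
  have "distinct v"
    unfolding distinct_count_atmost_1
  proof
    fix x
    show "count (mset v) x = (if x \<in> set v then 1 else 0)"
      using simple[of x] v count_eq_zero_iff[of "mset v" x] by (auto simp flip: set_mset_mset)
  qed
  show "\<exists>\<sigma>. \<sigma> permutes {..<size A} \<and> (\<forall>k<size A. cmod (u ! k - v ! \<sigma> k) < \<epsilon>)"
  proof (rule matching_permutation[OF len])
    fix j assume "j < size A"
    then have "v ! j \<in># B" using len v by (metis nth_mem set_mset_mset)
    then obtain x where "x \<in># A" "cmod (x - v ! j) < \<epsilon>" using near by blast
    then show "\<exists>k<size A. cmod (u ! k - v ! j) < \<epsilon>"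
      using u len by (metis in_set_conv_nth set_mset_mset)
  next
    fix k j j' assume "k < size A" "j < size A" "j' < size A"
      and "cmod (u ! k - v ! j) < \<epsilon>" "cmod (u ! k - v ! j') < \<epsilon>"
    moreover have "u ! k \<in># A" "v ! j \<in># B" "v ! j' \<in># B"
      using \<open>k < size A\<close> \<open>j < size A\<close> \<open>j' < size A\<close> u v len by (metis nth_mem set_mset_mset)+
    ultimately have "v ! j = v ! j'"
      using unique by blast
    then show "j = j'" using \<open>distinct v\<close> \<open>j < size A\<close> \<open>j' < size A\<close> len by (simp add: nth_eq_iff_index_eq)
  qed
qed

lemma norm_power_diff_le:
  fixes s s' :: "'a :: real_normed_field"
  assumes "norm s \<le> \<rho>" "norm s' \<le> \<rho>"
  shows "norm (s ^ n - s' ^ n) \<le> real n * \<rho> ^ (n - 1) * norm (s - s')"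
proof -
  have "norm (s ^ n - s' ^ n) = norm (s - s') * norm (\<Sum>i<n. s' ^ (n - Suc i) * s ^ i)"
    by (simp add: power_diff_sumr2 norm_mult)
  also have "norm (\<Sum>i<n. s' ^ (n - Suc i) * s ^ i) \<le> (\<Sum>i<n. \<rho> ^ (n - 1))"
  proof (rule order_trans[OF norm_sum sum_mono])
    fix i assume "i \<in> {..<n}"
    have "norm (s' ^ (n - Suc i) * s ^ i) \<le> \<rho> ^ (n - Suc i) * \<rho> ^ i"
      unfolding norm_mult norm_power using assms order_trans[OF norm_ge_zero assms(1)]
      by (intro mult_mono power_mono zero_le_power) auto
    also have "\<dots> = \<rho> ^ (n - 1)"
      using \<open>i \<in> {..<n}\<close> by (simp flip: power_add)
    finally show "norm (s' ^ (n - Suc i) * s ^ i) \<le> \<rho> ^ (n - 1)" .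
  qed
  hence "norm (s - s') * norm (\<Sum>i<n. s' ^ (n - Suc i) * s ^ i) \<le> norm (s - s') * (real n * \<rho> ^ (n - 1))"
    by (intro mult_left_mono) auto
  finally show ?thesis by (simp add: algebra_simps)
qed

lemma taylor_locally_injective:
  fixes p :: "complex poly"
  assumes deg: "degree p \<le> N" and N: "N \<ge> 1"
    and dominant: "(\<Sum>k\<in>{1..<N}. cmod (poly ((pderiv ^^ Suc k) p) c) * \<rho> ^ k / fact k) < cmod (poly (pderiv p) c)"
    and s: "cmod s \<le> \<rho>" and s': "cmod s' \<le> \<rho>" and eq: "poly p (c + s) = poly p (c + s')"
  shows "s = s'"
proof (rule ccontr)
  assume ne: "s \<noteq> s'"
  define P where "P = (\<lambda>k. poly ((pderiv ^^ k) p) c)"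
  define R where "R = (\<Sum>k\<in>{1..<N}. P (Suc k) / fact (Suc k) * (s ^ Suc k - s' ^ Suc k))"
  have taylor: "poly p (c + t) = P 0 + (\<Sum>k<N. P (Suc k) / fact (Suc k) * t ^ Suc k)" for t
    unfolding poly_taylor[OF deg] sum.atMost_shift by (simp add: P_def)
  have "0 = poly p (c + s) - poly p (c + s')" using eq by simp
  also have "\<dots> = (\<Sum>k<N. P (Suc k) / fact (Suc k) * (s ^ Suc k - s' ^ Suc k))"
    unfolding taylor by (simp add: sum_subtractf[symmetric] right_diff_distrib)
  also have "\<dots> = P 1 * (s - s') + R"
    using N by (simp add: R_def lessThan_atLeast0 sum.atLeast_Suc_lessThan)
  finally have linear_part: "P 1 * (s - s') = - R" by (simp add: algebra_simps)
  have "cmod R \<le> (\<Sum>k\<in>{1..<N}. cmod (P (Suc k) / fact (Suc k) * (s ^ Suc k - s' ^ Suc k)))"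
    unfolding R_def by (rule norm_sum)
  also have "\<dots> \<le> (\<Sum>k\<in>{1..<N}. cmod (P (Suc k)) * \<rho> ^ k / fact k * cmod (s - s'))"
  proof (rule sum_mono)
    fix k
    have "cmod (P (Suc k) / fact (Suc k) * (s ^ Suc k - s' ^ Suc k))
        \<le> cmod (P (Suc k)) / fact (Suc k) * (real (Suc k) * \<rho> ^ k * cmod (s - s'))"
      unfolding norm_mult norm_divide norm_fact
      using norm_power_diff_le[OF s s', of "Suc k"] by (intro mult_left_mono) auto
    also have "\<dots> = cmod (P (Suc k)) * \<rho> ^ k / fact k * cmod (s - s')"
      by (simp add: fact_Suc field_simps del: of_nat_Suc)
    finally show "cmod (P (Suc k) / fact (Suc k) * (s ^ Suc k - s' ^ Suc k))
        \<le> cmod (P (Suc k)) * \<rho> ^ k / fact k * cmod (s - s')" .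
  qed
  also have "\<dots> = (\<Sum>k\<in>{1..<N}. cmod (P (Suc k)) * \<rho> ^ k / fact k) * cmod (s - s')"
    by (simp add: sum_distrib_right)
  also have "\<dots> < cmod (P 1) * cmod (s - s')"
    using dominant ne by (intro mult_strict_right_mono) (auto simp: P_def)
  finally show False
    using linear_part by (metis norm_minus_cancel norm_mult order_less_irrefl)
qed

lemma taylor_pderiv_nonzero:
  fixes p :: "complex poly"
  assumes deg: "degree p \<le> N" and N: "N \<ge> 1"
    and dominant: "(\<Sum>k\<in>{1..<N}. cmod (poly ((pderiv ^^ Suc k) p) c) * \<rho> ^ k / fact k) < cmod (poly (pderiv p) c)"
    and s: "cmod s \<le> \<rho>"
  shows "poly (pderiv p) (c + s) \<noteq> 0"
proof -
  define P where "P = (\<lambda>k. poly ((pderiv ^^ k) p) c)"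
  have "poly (pderiv p) (c + s) = (\<Sum>k\<le>N - 1. poly ((pderiv ^^ k) (pderiv p)) c / fact k * s ^ k)"
    using deg by (intro poly_taylor) (simp add: degree_pderiv)
  also have "\<dots> = P 1 + (\<Sum>k\<in>{1..<N}. P (Suc k) / fact k * s ^ k)"
  proof -
    have "{..N - 1} = insert 0 {1..<N}" using N by auto
    then show ?thesis by (simp add: P_def funpow_Suc_right del: funpow.simps)
  qed
  finally have taylor: "poly (pderiv p) (c + s) = P 1 + (\<Sum>k\<in>{1..<N}. P (Suc k) / fact k * s ^ k)" .
  have "cmod (\<Sum>k\<in>{1..<N}. P (Suc k) / fact k * s ^ k) \<le> (\<Sum>k\<in>{1..<N}. cmod (P (Suc k)) * \<rho> ^ k / fact k)"
  proof (rule order_trans[OF norm_sum sum_mono])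
    fix k
    show "cmod (P (Suc k) / fact k * s ^ k) \<le> cmod (P (Suc k)) * \<rho> ^ k / fact k"
    proof -
      have "cmod (P (Suc k) / fact k * s ^ k) = cmod (P (Suc k)) * cmod s ^ k / fact k"
        by (simp add: norm_mult norm_divide norm_power)
      also have "\<dots> \<le> cmod (P (Suc k)) * \<rho> ^ k / fact k"
        using s by (intro divide_right_mono mult_left_mono power_mono) auto
      finally show ?thesis .
    qed
  qed
  then have "cmod (\<Sum>k\<in>{1..<N}. P (Suc k) / fact k * s ^ k) < cmod (P 1)"
    using dominant unfolding P_def by simp
  then show ?thesis
    unfolding taylor by (metis add.commute add_eq_0_iff norm_minus_cancel order_less_irrefl)
qed

lemma in_proots_iff: "p \<noteq> 0 \<Longrightarrow> x \<in># proots p \<longleftrightarrow> poly p x = 0"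
  by (simp flip: set_mset_def[of "proots p"] add: set_count_proots)

lemma dF_proots_less:
  fixes g h :: "complex poly"
  assumes deg: "degree h = degree g" "degree g \<ge> 1"
    and near: "\<And>z. poly h z = 0 \<Longrightarrow> \<exists>u. poly g u = 0 \<and> cmod (u - z) < \<epsilon>"
    and inj: "\<And>u s s'. poly g u = 0 \<Longrightarrow> cmod s \<le> \<epsilon> \<Longrightarrow> cmod s' \<le> \<epsilon> \<Longrightarrow>
                poly h (u + s) = poly h (u + s') \<Longrightarrow> s = s'"
    and nonsingular: "\<And>u s. poly g u = 0 \<Longrightarrow> cmod s \<le> \<epsilon> \<Longrightarrow> poly (pderiv h) (u + s) \<noteq> 0"
  shows "dF (proots g) (proots h) < \<epsilon>"
proof -
  have g0: "g \<noteq> 0" and h0: "h \<noteq> 0" using deg by auto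
  have "rsquarefree h"
    unfolding rsquarefree_roots
  proof (intro allI notI)
    fix z assume z: "poly h z = 0 \<and> poly (pderiv h) z = 0"
    then obtain u where "poly g u = 0" "cmod (u - z) < \<epsilon>" using near by blast
    then have "poly (pderiv h) (u + (z - u)) \<noteq> 0"
      by (intro nonsingular) (auto simp: norm_minus_commute)
    then show False using z by simp
  qed
  then have simple: "order x h = 0 \<or> order x h = 1" for x
    by (simp add: rsquarefree_def)
  show ?thesis
  proof (rule dF_less)
    show "size (proots h) = size (proots g)" "1 \<le> size (proots g)"
      using deg by (simp_all add: size_proots_complex)
    show "count (proots h) x \<le> 1" for x
      using h0 simple[of x] by (simp del: count_proots add: count_proots[OF h0]) linarith
  next
    fix v assume "v \<in># proots h"
    then obtain u where "poly g u = 0" "cmod (u - v) < \<epsilon>"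
      using near in_proots_iff[OF h0] by blast
    then show "\<exists>u\<in>#proots g. cmod (u - v) < \<epsilon>" using in_proots_iff[OF g0] by blast
  next
    fix u v v' assume u: "u \<in># proots g" and v: "v \<in># proots h" "v' \<in># proots h"
      and close: "cmod (u - v) < \<epsilon>" "cmod (u - v') < \<epsilon>"
    have "v - u = v' - u"
    proof (rule inj)
      show "poly g u = 0" using u in_proots_iff[OF g0] by blast
      show "cmod (v - u) \<le> \<epsilon>" "cmod (v' - u) \<le> \<epsilon>"
        using close by (simp_all add: norm_minus_commute)
      show "poly h (u + (v - u)) = poly h (u + (v' - u))"
        using v in_proots_iff[OF h0] by simp
    qed
    then show "v = v'" by simp
  qed
qed

(* Every root of T f, shifted by beta, lies closer than this to a root of f. *)
definition far_radius :: "nat \<Rightarrow> (nat \<Rightarrow> complex) \<Rightarrow> real" where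
  "far_radius n \<alpha> = 1 + 2 * cmod (\<alpha> 1 / \<alpha> 0) + 2 * real n + 4 * real n ^ 2 * 2 ^ n * defect_mass n \<alpha>"

(* The conditions on the margin L = tau f - far_radius - |beta| used in the estimates (1) and (2). *)
definition admissible_margin :: "nat \<Rightarrow> (nat \<Rightarrow> complex) \<Rightarrow> real \<Rightarrow> real \<Rightarrow> bool" where
  "admissible_margin n \<alpha> \<epsilon> L \<longleftrightarrow> real n \<le> L \<and> cmod (\<alpha> 1 / \<alpha> 0) \<le> L \<and> 1 \<le> L
     \<and> 4 * real n ^ 2 * 2 ^ n * defect_mass n \<alpha> \<le> L \<and> 4 * real n ^ 2 * \<epsilon> \<le> L
     \<and> defect_mass n \<alpha> * real n ^ 2 * 2 ^ n < L * \<epsilon>"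

lemma far_radius_ge_1: "far_radius n \<alpha> \<ge> 1"
  using defect_mass_nonneg[of n \<alpha>] unfolding far_radius_def by simp

lemma admissible_margin_eventually:
  assumes "\<epsilon> > 0"
  shows "\<exists>L0>0. \<forall>L\<ge>L0. admissible_margin n \<alpha> \<epsilon> L"
proof -
  define K where "K = defect_mass n \<alpha> * real n ^ 2 * 2 ^ n"
  define L0 where "L0 = 1 + cmod (\<alpha> 1 / \<alpha> 0) + real n + 4 * K + 4 * real n ^ 2 * \<epsilon> + K / \<epsilon>"
  have K: "K \<ge> 0" unfolding K_def using defect_mass_nonneg[of n \<alpha>] by simp
  have nonneg: "0 \<le> K / \<epsilon>" "0 \<le> 4 * real n ^ 2 * \<epsilon>" "0 \<le> cmod (\<alpha> 1 / \<alpha> 0)"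
    using K assms by simp_all
  then have "L0 > 0"
    using K unfolding L0_def by linarith
  moreover have "admissible_margin n \<alpha> \<epsilon> L" if "L \<ge> L0" for L
  proof -
    have "K / \<epsilon> < L" using that K nonneg unfolding L0_def by linarith
    then have "K < L * \<epsilon>" using assms by (simp add: pos_divide_less_eq)
    moreover have "4 * real n ^ 2 * 2 ^ n * defect_mass n \<alpha> = 4 * K" by (simp add: K_def)
    ultimately show ?thesis
      using that K nonneg unfolding admissible_margin_def L0_def K_def[symmetric] by linarith
  qed
  ultimately show ?thesis by blast
qed

lemma admissible_margin_defect_ratio:
  assumes margin: "admissible_margin n \<alpha> \<epsilon> L" and d: "d \<le> n"
  shows "defect_mass n \<alpha> * (real d / L) ^ 2 * 2 ^ n \<le> 1 / 4"
proof -
  have L: "real n \<le> L" "1 \<le> L" "4 * real n ^ 2 * 2 ^ n * defect_mass n \<alpha> \<le> L"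
    using margin by (simp_all add: admissible_margin_def)
  have "(real d / L) ^ 2 \<le> (real n / L) ^ 2"
    using d L by (intro power_mono divide_right_mono) auto
  also have "\<dots> \<le> real n ^ 2 / L"
    using L mult_right_mono[of 1 L "real n * real n"] by (simp add: power2_eq_square field_simps)
  finally have "defect_mass n \<alpha> * (real d / L) ^ 2 * 2 ^ n \<le> defect_mass n \<alpha> * (real n ^ 2 / L) * 2 ^ n"
    using defect_mass_nonneg[of n \<alpha>] by (intro mult_right_mono mult_left_mono) auto
  also have "\<dots> \<le> 1 / 4" using L by (simp add: field_simps)
  finally show ?thesis .
qed

lemma admissible_margin_eps_ratio:
  assumes margin: "admissible_margin n \<alpha> \<epsilon> L" and d: "d \<le> n" and n: "n \<ge> 1" and eps: "\<epsilon> > 0"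
  shows "real d / L * \<epsilon> \<le> 1 / (4 * real n)"
proof -
  have L: "real n \<le> L" "1 \<le> L" "4 * real n ^ 2 * \<epsilon> \<le> L"
    using margin by (simp_all add: admissible_margin_def)
  have "real d / L * \<epsilon> \<le> real n / L * \<epsilon>"
    using d L eps by (intro mult_right_mono divide_right_mono) auto
  also have "\<dots> \<le> 1 / (4 * real n)"
    using L n eps by (simp add: field_simps power2_eq_square)
  finally show ?thesis .
qed

(* Estimate (1), first step: otherwise f(z + beta) would be dominated by the defect terms. *)
lemma diff_op_root_near_root:
  fixes f :: "complex poly"
  assumes deg: "degree f \<le> n" and f0: "f \<noteq> 0" and a0: "\<alpha> 0 \<noteq> 0"
    and z: "poly (diff_op n \<alpha> f) z = 0"
  shows "\<exists>a. poly f a = 0 \<and> cmod (z + \<alpha> 1 / \<alpha> 0 - a) < far_radius n \<alpha>"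
proof (rule ccontr)
  define B where "B = cmod (\<alpha> 1 / \<alpha> 0)"
  define \<Delta> where "\<Delta> = defect_mass n \<alpha>"
  define Dz where "Dz = far_radius n \<alpha>"
  define y where "y = z + \<alpha> 1 / \<alpha> 0"
  assume "\<not> ?thesis"
  then have far: "Dz \<le> cmod (y - a)" if "poly f a = 0" for a
    using that by (auto simp: not_less y_def Dz_def)
  have \<Delta>: "\<Delta> \<ge> 0" unfolding \<Delta>_def by (rule defect_mass_nonneg)
  have Dz: "Dz = 1 + 2 * B + 2 * real n + 4 * real n ^ 2 * 2 ^ n * \<Delta>"
    by (simp add: Dz_def far_radius_def B_def \<Delta>_def)
  have B: "B \<ge> 0" "cmod (z - y) = B" by (simp_all add: B_def y_def)
  have big: "0 \<le> 4 * real n ^ 2 * 2 ^ n * \<Delta>" using \<Delta> by simp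
  have "poly f y \<noteq> 0" using far[of y] Dz B big by auto
  then have fy: "cmod (poly f y) > 0" by simp
  have roots_far: "Dz / 2 \<le> cmod (y - r) \<and> Dz / 2 \<le> cmod (z - r)" if "poly f r = 0" for r
  proof -
    have "cmod (y - r) \<le> cmod (z - r) + cmod (y - z)"
      using norm_triangle_ineq[of "z - r" "y - z"] by simp
    moreover have "Dz \<le> cmod (y - r)" by (rule far[OF that])
    ultimately show ?thesis using norm_minus_commute[of y z] Dz B big by (intro conjI; linarith)
  qed
  have "real (degree f) \<le> real n" using deg by simp
  then have Dz_half: "real (degree f) \<le> Dz / 2" "0 < Dz / 2" "cmod (z - y) \<le> Dz / 2"
    using Dz B big by linarith+
  define M where "M = (real (degree f) / (Dz / 2)) ^ 2 * (2 ^ n * cmod (poly f y))"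
  have "cmod (poly ((pderiv ^^ k) f) z) \<le> M" if "2 \<le> k" for k
    unfolding M_def using that roots_far by (intro higher_pderiv_transfer_bound[OF f0 deg Dz_half])
  then have "cmod (poly f y) \<le> \<Delta> * M"
    unfolding y_def \<Delta>_def using deg a0 z \<Delta> by (intro diff_op_root_bound) (auto simp: M_def)
  also have "\<dots> = (\<Delta> * 4 * real (degree f) ^ 2 * 2 ^ n / Dz ^ 2) * cmod (poly f y)"
    by (simp add: M_def power_divide field_simps)
  also have "\<dots> < 1 * cmod (poly f y)"
  proof (rule mult_strict_right_mono[OF _ fy])
    have "\<Delta> * 4 * real (degree f) ^ 2 * 2 ^ n \<le> \<Delta> * 4 * real n ^ 2 * 2 ^ n"
      using deg \<Delta> by (intro mult_right_mono mult_left_mono power_mono) auto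
    also have "\<dots> < Dz" using Dz B by (simp add: algebra_simps)
    also have "\<dots> \<le> Dz ^ 2"
      using far_radius_ge_1[of n \<alpha>] mult_left_mono[of 1 Dz Dz] by (simp add: Dz_def power2_eq_square)
    finally show "\<Delta> * 4 * real (degree f) ^ 2 * 2 ^ n / Dz ^ 2 < 1"
      using Dz B big by (simp add: divide_less_eq)
  qed
  finally show False by simp
qed

(* Estimate (1), second step: near a root of f the roots of f' are at distance >= L, so the defect
   terms are of size (n/L) |f'(z + beta)| <= (n^2 / (L eps)) |f(z + beta)|. *)
lemma diff_op_root_close_to_root:
  fixes f :: "complex poly"
  assumes rsq: "rsquarefree f" and deg: "2 \<le> degree f" "degree f \<le> n" and a0: "\<alpha> 0 \<noteq> 0"
    and eps: "\<epsilon> > 0" and margin: "admissible_margin n \<alpha> \<epsilon> L"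
    and tau: "far_radius n \<alpha> + cmod (\<alpha> 1 / \<alpha> 0) + L \<le> tau f"
    and a: "poly f a = 0" "cmod (z + \<alpha> 1 / \<alpha> 0 - a) < far_radius n \<alpha>"
    and z: "poly (diff_op n \<alpha> f) z = 0"
  shows "\<exists>a. poly f a = 0 \<and> cmod (z + \<alpha> 1 / \<alpha> 0 - a) < \<epsilon>"
proof (rule ccontr)
  define B where "B = cmod (\<alpha> 1 / \<alpha> 0)"
  define \<Delta> where "\<Delta> = defect_mass n \<alpha>"
  define y where "y = z + \<alpha> 1 / \<alpha> 0"
  define m where "m = degree f"
  assume "\<not> ?thesis"
  then have far: "\<epsilon> \<le> cmod (y - r)" if "poly f r = 0" for r
    using that by (auto simp: not_less y_def)
  have f0: "f \<noteq> 0" and f'0: "pderiv f \<noteq> 0"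
    using rsq deg by (auto simp: rsquarefree_def pderiv_eq_0_iff)
  have L: "real n \<le> L" "B \<le> L" "\<Delta> * real n ^ 2 * 2 ^ n < L * \<epsilon>"
    using margin by (simp_all add: admissible_margin_def B_def \<Delta>_def)
  have B: "cmod (z - y) = B" by (simp add: B_def y_def)
  have "poly f y \<noteq> 0" using far[of y] eps by auto
  then have fy: "cmod (poly f y) > 0" by simp
  have y_far: "L \<le> cmod (y - v)" and z_far: "L \<le> cmod (z - v)" if "poly (pderiv f) v = 0" for v
  proof -
    have "cmod (z - a) \<le> cmod (y - a) + B"
      using norm_triangle_ineq[of "z - y" "y - a"] B by simp
    then show "L \<le> cmod (y - v)" "L \<le> cmod (z - v)"
      using a(2) tau norm_ge_zero[of "\<alpha> 1 / \<alpha> 0"] unfolding y_def[symmetric] B_def[symmetric]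
      by (intro roots_of_pderiv_far[OF rsq deg(1) a(1) _ that]; linarith)+
  qed
  have degf': "degree (pderiv f) \<le> n" "real (degree (pderiv f)) \<le> L"
    "real (degree (pderiv f)) = real m - 1"
    using deg L by (simp_all add: degree_pderiv m_def of_nat_diff)
  have Lpos: "L > 0" using degf' deg by (simp add: m_def)
  define M where "M = (real m - 1) / L * (2 ^ n * cmod (poly (pderiv f) y))"
  have "cmod (poly ((pderiv ^^ k) f) z) \<le> M" if "2 \<le> k" for k
    using higher_pderiv_bound_by_pderiv[OF f'0 degf'(1,2) Lpos, of z y 1 k] y_far z_far B L that
    by (simp add: M_def degf'(3))
  then have "cmod (poly f y) \<le> \<Delta> * M"
    unfolding y_def \<Delta>_def using deg a0 z Lpos
    by (intro diff_op_root_bound) (auto simp: M_def m_def)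
  then have "cmod (poly f y) * \<epsilon> \<le> \<Delta> * M * \<epsilon>"
    using eps by (simp add: mult_right_mono)
  also have "\<dots> = \<Delta> * (real m - 1) * 2 ^ n / L * (cmod (poly (pderiv f) y) * \<epsilon>)"
    by (simp add: M_def)
  also have "\<dots> \<le> \<Delta> * (real m - 1) * 2 ^ n / L * (real m * cmod (poly f y))"
    using higher_pderiv_bound[OF f0 eps, of y 1] far deg Lpos defect_mass_nonneg[of n \<alpha>]
    by (intro mult_left_mono) (auto simp: m_def \<Delta>_def norm_minus_commute)
  also have "\<dots> = \<Delta> * 2 ^ n / L * cmod (poly f y) * ((real m - 1) * real m)"
    by (simp add: algebra_simps)
  also have "\<dots> \<le> \<Delta> * 2 ^ n / L * cmod (poly f y) * real n ^ 2"
    using deg Lpos defect_mass_nonneg[of n \<alpha>] unfolding power2_eq_square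
    by (intro mult_left_mono mult_mono) (auto simp: m_def \<Delta>_def)
  also have "\<dots> < \<epsilon> * cmod (poly f y)"
    using L fy Lpos by (simp add: pos_divide_less_eq algebra_simps)
  finally show False by simp
qed

lemma pderiv_bounds_near_simple_root:
  fixes f :: "complex poly"
  assumes rsq: "rsquarefree f" and deg: "2 \<le> degree f" "degree f \<le> n" and a0: "\<alpha> 0 \<noteq> 0"
    and margin: "admissible_margin n \<alpha> \<epsilon> L" and tau: "cmod (\<alpha> 1 / \<alpha> 0) + L \<le> tau f"
    and a: "poly f a = 0"
  defines "q \<equiv> real (degree (pderiv f)) / L" and "Fp \<equiv> cmod (poly (pderiv f) a)"
  shows "cmod (poly ((pderiv ^^ Suc i) f) a) \<le> q ^ i * Fp"
    and "cmod (\<Sum>k\<le>n. shift_defect \<alpha> k * poly ((pderiv ^^ k) ((pderiv ^^ Suc i) f)) (a - \<alpha> 1 / \<alpha> 0))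
           \<le> defect_mass n \<alpha> * (q ^ (i + 2) * (2 ^ n * Fp))"
proof -
  define B where "B = cmod (\<alpha> 1 / \<alpha> 0)"
  define c where "c = a - \<alpha> 1 / \<alpha> 0"
  have f'0: "pderiv f \<noteq> 0" using deg by (auto simp: pderiv_eq_0_iff)
  have L: "real n \<le> L" "B \<le> L" "1 \<le> L" using margin by (simp_all add: admissible_margin_def B_def)
  have degf': "real (degree (pderiv f)) \<le> L" "degree (pderiv f) \<le> n"
    using deg L by (simp_all add: degree_pderiv)
  have Lpos: "L > 0" using L by simp
  have "L \<le> tau f" using tau norm_ge_zero[of "\<alpha> 1 / \<alpha> 0"] by linarith
  then have "cmod (a - a) + L \<le> tau f" by simp
  moreover have "cmod (c - a) + L \<le> tau f" using tau by (simp add: c_def)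
  ultimately have a_far: "L \<le> cmod (a - v)" and c_far: "L \<le> cmod (c - v)" if "poly (pderiv f) v = 0" for v
    using roots_of_pderiv_far[OF rsq deg(1) a _ that] by blast+
  show "cmod (poly ((pderiv ^^ Suc i) f) a) \<le> q ^ i * Fp"
    using higher_pderiv_ratio_bound[OF f'0 degf'(1) Lpos a_far order_refl]
    by (simp add: q_def Fp_def funpow_Suc_right del: funpow.simps)
  show "cmod (\<Sum>k\<le>n. shift_defect \<alpha> k * poly ((pderiv ^^ k) ((pderiv ^^ Suc i) f)) (a - \<alpha> 1 / \<alpha> 0))
           \<le> defect_mass n \<alpha> * (q ^ (i + 2) * (2 ^ n * Fp))"
    unfolding c_def[symmetric]
  proof (rule defect_sum_bound)
    show "\<alpha> 0 \<noteq> 0" by (rule a0)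
    show "0 \<le> q ^ (i + 2) * (2 ^ n * Fp)" using Lpos by (simp add: q_def Fp_def)
    fix k :: nat assume "2 \<le> k"
    then have "cmod (poly ((pderiv ^^ (k + Suc i)) f) c) \<le> q ^ (i + 2) * (2 ^ n * Fp)"
      unfolding q_def Fp_def using a_far c_far L
      by (intro higher_pderiv_bound_by_pderiv[OF f'0 degf'(2,1) Lpos]) (auto simp: c_def B_def)
    then show "cmod (poly ((pderiv ^^ k) ((pderiv ^^ Suc i) f)) c) \<le> q ^ (i + 2) * (2 ^ n * Fp)"
      by (simp only: funpow_add o_def)
  qed
qed

lemma diff_op_pderiv_bounds_at_shifted_root:
  fixes f :: "complex poly"
  assumes rsq: "rsquarefree f" and deg: "2 \<le> degree f" "degree f \<le> n" and a0: "\<alpha> 0 \<noteq> 0"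
    and margin: "admissible_margin n \<alpha> \<epsilon> L" and tau: "cmod (\<alpha> 1 / \<alpha> 0) + L \<le> tau f"
    and a: "poly f a = 0"
  defines "q \<equiv> real (degree (pderiv f)) / L" and "Fp \<equiv> cmod (poly (pderiv f) a)"
  shows "cmod (poly ((pderiv ^^ Suc i) (diff_op n \<alpha> f)) (a - \<alpha> 1 / \<alpha> 0)) \<le> cmod (\<alpha> 0) * (5 / 4 * q ^ i * Fp)"
    and "cmod (\<alpha> 0) * (3 / 4 * Fp) \<le> cmod (poly (pderiv (diff_op n \<alpha> f)) (a - \<alpha> 1 / \<alpha> 0))"
proof -
  define \<Delta> where "\<Delta> = defect_mass n \<alpha>"
  define c where "c = a - \<alpha> 1 / \<alpha> 0"
  define E where "E = (\<lambda>i. \<Sum>k\<le>n. shift_defect \<alpha> k * poly ((pderiv ^^ k) ((pderiv ^^ Suc i) f)) c)"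
  note bounds = pderiv_bounds_near_simple_root[OF rsq deg a0 margin tau a, folded q_def Fp_def \<Delta>_def]
  have q: "0 \<le> q" using margin by (simp add: q_def admissible_margin_def)
  have Fp: "Fp \<ge> 0" by (simp add: Fp_def)
  have expand: "poly ((pderiv ^^ Suc i) (diff_op n \<alpha> f)) c = \<alpha> 0 * (poly ((pderiv ^^ Suc i) f) a + E i)" for i
  proof -
    have "degree ((pderiv ^^ Suc i) f) \<le> n" using deg degree_higher_pderiv[of "Suc i" f] by linarith
    then show ?thesis
      unfolding higher_pderiv_diff_op using poly_diff_op_shift[of _ n \<alpha> c] a0
      by (simp add: c_def E_def)
  qed
  have small: "\<Delta> * q ^ 2 * 2 ^ n \<le> 1 / 4"
    unfolding q_def \<Delta>_def using deg
    by (intro admissible_margin_defect_ratio[OF margin]) (simp add: degree_pderiv)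
  have E: "cmod (E i) \<le> 1 / 4 * q ^ i * Fp" for i
  proof -
    have "cmod (E i) \<le> \<Delta> * (q ^ (i + 2) * (2 ^ n * Fp))"
      using bounds(2)[of i] by (simp add: E_def c_def)
    also have "\<dots> = (\<Delta> * q ^ 2 * 2 ^ n) * (q ^ i * Fp)" by (simp add: power_add power2_eq_square)
    also have "\<dots> \<le> 1 / 4 * (q ^ i * Fp)" using small q Fp by (intro mult_right_mono) auto
    finally show ?thesis by simp
  qed
  show "cmod (poly ((pderiv ^^ Suc i) (diff_op n \<alpha> f)) (a - \<alpha> 1 / \<alpha> 0)) \<le> cmod (\<alpha> 0) * (5 / 4 * q ^ i * Fp)"
  proof -
    have "cmod (poly ((pderiv ^^ Suc i) f) a + E i) \<le> q ^ i * Fp + 1 / 4 * q ^ i * Fp"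
      using bounds(1) E by (intro order_trans[OF norm_triangle_ineq add_mono])
    then show ?thesis
      unfolding c_def[symmetric] expand norm_mult by (intro mult_left_mono) (auto simp: mult_ac)
  qed
  show "cmod (\<alpha> 0) * (3 / 4 * Fp) \<le> cmod (poly (pderiv (diff_op n \<alpha> f)) (a - \<alpha> 1 / \<alpha> 0))"
  proof -
    have "Fp - 1 / 4 * Fp \<le> cmod (poly (pderiv f) a + E 0)"
      using E[of 0] norm_triangle_ineq4[of "poly (pderiv f) a + E 0" "E 0"] by (simp add: Fp_def)
    then have "cmod (\<alpha> 0) * (3 / 4 * Fp) \<le> cmod (\<alpha> 0) * cmod (poly (pderiv f) a + E 0)"
      by (intro mult_left_mono) auto
    then show ?thesis
      using expand[of 0] unfolding c_def[symmetric] by (simp add: norm_mult)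
  qed
qed

lemma diff_op_dominant_at_shifted_root:
  fixes f :: "complex poly"
  assumes rsq: "rsquarefree f" and deg: "2 \<le> degree f" "degree f \<le> n" and a0: "\<alpha> 0 \<noteq> 0"
    and eps: "\<epsilon> > 0" and margin: "admissible_margin n \<alpha> \<epsilon> L"
    and tau: "cmod (\<alpha> 1 / \<alpha> 0) + L \<le> tau f" and a: "poly f a = 0"
  defines "h \<equiv> diff_op n \<alpha> f" and "c \<equiv> a - \<alpha> 1 / \<alpha> 0"
  shows "(\<Sum>k\<in>{1..<n}. cmod (poly ((pderiv ^^ Suc k) h) c) * \<epsilon> ^ k / fact k) < cmod (poly (pderiv h) c)"
proof -
  define q where "q = real (degree (pderiv f)) / L"
  define Fp where "Fp = cmod (poly (pderiv f) a)"
  note est = diff_op_pderiv_bounds_at_shifted_root[OF rsq deg a0 margin tau a,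
      folded q_def Fp_def h_def c_def]
  have n: "real n \<ge> 2" using deg by simp
  have Fp: "Fp > 0" using rsq a by (auto simp: Fp_def rsquarefree_roots)
  have q: "0 \<le> q" using margin by (simp add: q_def admissible_margin_def)
  have q\<epsilon>: "q * \<epsilon> \<le> 1 / (4 * real n)"
    unfolding q_def using deg eps
    by (intro admissible_margin_eps_ratio[OF margin]) (auto simp: degree_pderiv)
  then have q\<epsilon>1: "q * \<epsilon> \<le> 1" using n by (simp add: divide_le_eq_1 order_trans)
  have summand: "cmod (poly ((pderiv ^^ Suc k) h) c) * \<epsilon> ^ k / fact k \<le> cmod (\<alpha> 0) * (5 / 4 * (q * \<epsilon>) * Fp)"
    if "k \<ge> 1" for k
  proof -
    have "cmod (poly ((pderiv ^^ Suc k) h) c) * \<epsilon> ^ k / fact k \<le> cmod (poly ((pderiv ^^ Suc k) h) c) * \<epsilon> ^ k"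
      using divide_left_mono[of 1 "fact k" "cmod (poly ((pderiv ^^ Suc k) h) c) * \<epsilon> ^ k"] eps
      by (simp add: fact_ge_1 del: funpow.simps)
    also have "\<dots> \<le> cmod (\<alpha> 0) * (5 / 4 * q ^ k * Fp) * \<epsilon> ^ k"
      using eps by (intro mult_right_mono est(1)) auto
    also have "\<dots> = cmod (\<alpha> 0) * (5 / 4 * (q * \<epsilon>) ^ k * Fp)"
      by (simp add: power_mult_distrib)
    also have "\<dots> \<le> cmod (\<alpha> 0) * (5 / 4 * (q * \<epsilon>) ^ 1 * Fp)"
      using that q eps q\<epsilon>1 Fp by (intro mult_left_mono mult_right_mono power_decreasing) auto
    finally show ?thesis by simp
  qed
  have "(\<Sum>k\<in>{1..<n}. cmod (poly ((pderiv ^^ Suc k) h) c) * \<epsilon> ^ k / fact k)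
        \<le> real (card {1..<n}) * (cmod (\<alpha> 0) * (5 / 4 * (q * \<epsilon>) * Fp))"
    using summand by (intro sum_bounded_above) auto
  also have "\<dots> \<le> real n * (cmod (\<alpha> 0) * (5 / 4 * (1 / (4 * real n)) * Fp))"
    using q\<epsilon> Fp q eps by (intro mult_mono mult_left_mono mult_right_mono) auto
  also have "\<dots> = cmod (\<alpha> 0) * (5 / 16 * Fp)" using n by (simp add: field_simps)
  also have "\<dots> < cmod (\<alpha> 0) * (3 / 4 * Fp)" using a0 Fp by (intro mult_strict_left_mono) auto
  also have "\<dots> \<le> cmod (poly (pderiv h) c)" by (rule est(2))
  finally show ?thesis .
qed

lemma poly_shift_poly: "poly (shift_poly \<beta> f) u = poly f (\<beta> + u)"
  by (simp add: shift_poly_def poly_pcompose)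

lemma diff_op_roots_near_shifted_roots:
  fixes f :: "complex poly"
  assumes rsq: "rsquarefree f" and deg: "2 \<le> degree f" "degree f \<le> n" and a0: "\<alpha> 0 \<noteq> 0"
    and eps: "\<epsilon> > 0" and margin: "admissible_margin n \<alpha> \<epsilon> L"
    and tau: "far_radius n \<alpha> + cmod (\<alpha> 1 / \<alpha> 0) + L \<le> tau f"
    and z: "poly (diff_op n \<alpha> f) z = 0"
  shows "\<exists>u. poly (shift_poly (\<alpha> 1 / \<alpha> 0) f) u = 0 \<and> cmod (u - z) < \<epsilon>"
proof -
  have "f \<noteq> 0" using rsq by (simp add: rsquarefree_def)
  then obtain a where "poly f a = 0" "cmod (z + \<alpha> 1 / \<alpha> 0 - a) < far_radius n \<alpha>"
    using diff_op_root_near_root[OF deg(2) _ a0 z] by blast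
  then obtain a' where "poly f a' = 0" "cmod (z + \<alpha> 1 / \<alpha> 0 - a') < \<epsilon>"
    using diff_op_root_close_to_root[OF rsq deg a0 eps margin tau _ _ z] by blast
  then show ?thesis
    by (intro exI[of _ "a' - \<alpha> 1 / \<alpha> 0"]) (simp add: poly_shift_poly norm_minus_commute algebra_simps)
qed

lemma diff_op_locally_injective_at_shifted_roots:
  fixes f :: "complex poly"
  assumes rsq: "rsquarefree f" and deg: "2 \<le> degree f" "degree f \<le> n" and a0: "\<alpha> 0 \<noteq> 0"
    and eps: "\<epsilon> > 0" and margin: "admissible_margin n \<alpha> \<epsilon> L"
    and tau: "cmod (\<alpha> 1 / \<alpha> 0) + L \<le> tau f"
    and u: "poly (shift_poly (\<alpha> 1 / \<alpha> 0) f) u = 0" and s: "cmod s \<le> \<epsilon>"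
  shows "\<And>s'. cmod s' \<le> \<epsilon> \<Longrightarrow> poly (diff_op n \<alpha> f) (u + s) = poly (diff_op n \<alpha> f) (u + s') \<Longrightarrow> s = s'"
    and "poly (pderiv (diff_op n \<alpha> f)) (u + s) \<noteq> 0"
proof -
  have f0: "f \<noteq> 0" using rsq by (simp add: rsquarefree_def)
  have deg_h: "degree (diff_op n \<alpha> f) \<le> n" and n: "n \<ge> 1"
    using degree_diff_op[where \<alpha> = \<alpha> and p = f and n = n] a0 f0 deg by simp_all
  have "poly f (\<alpha> 1 / \<alpha> 0 + u) = 0" using u by (simp add: poly_shift_poly)
  from diff_op_dominant_at_shifted_root[OF rsq deg a0 eps margin tau this]
  have dominant: "(\<Sum>k\<in>{1..<n}. cmod (poly ((pderiv ^^ Suc k) (diff_op n \<alpha> f)) u) * \<epsilon> ^ k / fact k)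
                  < cmod (poly (pderiv (diff_op n \<alpha> f)) u)"
    by simp
  show "s = s'" if "cmod s' \<le> \<epsilon>" "poly (diff_op n \<alpha> f) (u + s) = poly (diff_op n \<alpha> f) (u + s')" for s'
    by (rule taylor_locally_injective[OF deg_h n dominant s that])
  show "poly (pderiv (diff_op n \<alpha> f)) (u + s) \<noteq> 0"
    by (rule taylor_pderiv_nonzero[OF deg_h n dominant s])
qed

theorem corollary4p4:
  fixes n :: nat and \<alpha> :: "nat \<Rightarrow> complex" and \<epsilon> :: real
  assumes "n \<ge> 2" and "\<alpha> 0 \<noteq> 0" and "\<epsilon> > 0"
  shows "\<exists>C > 0. \<forall>f :: complex poly.
           degree f \<le> n \<and> degree f \<ge> 2 \<and> rsquarefree f \<and> tau f > C \<longrightarrow>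
           dF (roots_mset (shift_poly (\<alpha> 1 / \<alpha> 0) f)) (roots_mset (diff_op n \<alpha> f)) < \<epsilon>"
proof -
  obtain L0 where L0: "L0 > 0" "\<And>L. L \<ge> L0 \<Longrightarrow> admissible_margin n \<alpha> \<epsilon> L"
    using admissible_margin_eventually[OF assms(3)] by blast
  define C where "C = far_radius n \<alpha> + cmod (\<alpha> 1 / \<alpha> 0) + L0"
  have "C > 0" using far_radius_ge_1[of n \<alpha>] L0(1) norm_ge_zero[of "\<alpha> 1 / \<alpha> 0"] unfolding C_def by linarith
  moreover have "dF (roots_mset (shift_poly (\<alpha> 1 / \<alpha> 0) f)) (roots_mset (diff_op n \<alpha> f)) < \<epsilon>"
    if f: "degree f \<le> n" "2 \<le> degree f" "rsquarefree f" "tau f > C" for f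
  proof -
    define L where "L = tau f - far_radius n \<alpha> - cmod (\<alpha> 1 / \<alpha> 0)"
    have margin: "admissible_margin n \<alpha> \<epsilon> L" using f(4) by (intro L0(2)) (simp add: L_def C_def)
    have tau: "far_radius n \<alpha> + cmod (\<alpha> 1 / \<alpha> 0) + L \<le> tau f" "cmod (\<alpha> 1 / \<alpha> 0) + L \<le> tau f"
      using far_radius_ge_1[of n \<alpha>] by (simp_all add: L_def)
    have "f \<noteq> 0" using f(3) by (simp add: rsquarefree_def)
    then have "degree (diff_op n \<alpha> f) = degree (shift_poly (\<alpha> 1 / \<alpha> 0) f)"
      using degree_diff_op[where \<alpha> = \<alpha> and p = f and n = n] assms(2)
      by (simp add: shift_poly_def degree_pcompose)
    then show ?thesis
      unfolding roots_mset_eq_proots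
      using f diff_op_roots_near_shifted_roots[OF f(3,2,1) assms(2,3) margin tau(1)]
        diff_op_locally_injective_at_shifted_roots[OF f(3,2,1) assms(2,3) margin tau(2)]
      by (intro dF_proots_less) (auto simp: shift_poly_def degree_pcompose)
  qed
  ultimately show ?thesis by blast
qed

end
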